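(* Let $\mathcal{G}$ be a graph on the vertex set $\{1,2,\ldots,d\}$, let $w(\mathcal{G})$ denote its treewidth, and let $\alpha$ be a real scalar. Suppose that: (i) $\mathcal{G}$ is chordal; (ii) $w(\mathcal{G})\leq \frac{2}{3}(d-1)$; (iii) $\alpha<\dfrac{1}{w(\mathcal{G})\sqrt{d-w(\mathcal{G})-1}+w(\mathcal{G})-1}$. Then $$\beta(\mathcal{G},\alpha)\leq\frac{w(\mathcal{G})\sqrt{d-w(\mathcal{G})-1}\;\alpha^2}{1-(w(\mathcal{G})-1)\,\alpha}.$$
   Context: A graph is chordal if it contains no induced cycle of length greater than three. For a chordal graph, $w(\mathcal{G})$ (treewidth) is the number of vertices of a largest clique of $\mathcal{G}$ minus one. For a symmetric matrix $M\in\mathbb{S}^d$, its support graph $\mathrm{supp}(M)$ is the graph on $\{1,\ldots,d\}$ with an edge $\{i,j\}$, $i\neq j$, iff $M_{ij}\neq 0$; $(\mathrm{supp}(M))^{(c)}$ denotes the complement graph. $\|M\|_{\max}=\max_{i\neq j}|M_{ij}|$ (maximum absolute off-diagonal entry). A matrix $M\in\mathbb{S}^d$ is called inverse-consistent if there exists $N\in\mathbb{S}^d$ with zero diagonal such that $M+N\succ 0$, $\mathrm{supp}(N)\subseteq(\mathrm{supp}(M))^{(c)}$, and $\mathrm{supp}((M+N)^{-1})\subseteq\mathrm{supp}(M)$; such $N$ is called an inverse-consistent complement of $M$ and denoted $M^{(c)}$ (every positive definite matrix has a unique inverse-consistent complement). Given a graph $\mathcal{G}$ and scalar $\alpha$,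 $\beta(\mathcal{G},\alpha)$ is defined as the maximum of $\|M^{(c)}\|_{\max}$ over all inverse-consistent positive definite matrices $M$ with all diagonal entries equal to $1$ such that $\mathrm{supp}(M)=\mathcal{G}$ and $\|M\|_{\max}\leq\alpha$. *)

theory Defs
  imports "HOL-Analysis.Analysis"
begin

text \<open>Graphs on the finite vertex type 'n (d = CARD('n)), given by an adjacency relation.\<close>

definition simple_graph :: "('n \<Rightarrow> 'n \<Rightarrow> bool) \<Rightarrow> bool" where
  "simple_graph E \<longleftrightarrow> (\<forall>i j. E i j \<longrightarrow> E j i) \<and> (\<forall>i. \<not> E i i)"

definition induced_cycle :: "('n \<Rightarrow> 'n \<Rightarrow> bool) \<Rightarrow> nat \<Rightarrow> (nat \<Rightarrow> 'n) \<Rightarrow> bool" where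
  "induced_cycle E k f \<longleftrightarrow> k \<ge> 3 \<and> inj_on f {..<k} \<and>
     (\<forall>i<k. \<forall>j<k. E (f i) (f j) \<longleftrightarrow> (j = (i + 1) mod k \<or> i = (j + 1) mod k))"

definition chordal :: "('n \<Rightarrow> 'n \<Rightarrow> bool) \<Rightarrow> bool" where
  "chordal E \<longleftrightarrow> \<not> (\<exists>k f. k > 3 \<and> induced_cycle E k f)"

definition is_clique :: "('n \<Rightarrow> 'n \<Rightarrow> bool) \<Rightarrow> 'n set \<Rightarrow> bool" where
  "is_clique E C \<longleftrightarrow> (\<forall>i\<in>C. \<forall>j\<in>C. i \<noteq> j \<longrightarrow> E i j)"

text \<open>Treewidth of a chordal graph: size of a largest clique minus one.\<close>
definition treewidth :: "('n::finite \<Rightarrow> 'n \<Rightarrow> bool) \<Rightarrow> nat" where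
  "treewidth E = Max {card C | C. is_clique E C} - 1"

definition sym_mat :: "real^'n^'n \<Rightarrow> bool" where
  "sym_mat M \<longleftrightarrow> transpose M = M"

definition pos_def :: "real^'n^'n \<Rightarrow> bool" where
  "pos_def M \<longleftrightarrow> sym_mat M \<and> (\<forall>x. x \<noteq> 0 \<longrightarrow> x \<bullet> (M *v x) > 0)"

definition supp_eq :: "real^'n^'n \<Rightarrow> ('n \<Rightarrow> 'n \<Rightarrow> bool) \<Rightarrow> bool" where
  "supp_eq M E \<longleftrightarrow> (\<forall>i j. i \<noteq> j \<longrightarrow> (M $ i $ j \<noteq> 0 \<longleftrightarrow> E i j))"

definition max_norm :: "real^'n::finite^'n \<Rightarrow> real" where
  "max_norm M = Max (insert 0 {\<bar>M $ i $ j\<bar> | i j. i \<noteq> j})"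

definition ic_complement :: "real^'n^'n \<Rightarrow> real^'n^'n \<Rightarrow> bool" where
  "ic_complement M N \<longleftrightarrow> sym_mat N \<and> (\<forall>i. N $ i $ i = 0) \<and> pos_def (M + N) \<and>
     (\<forall>i j. i \<noteq> j \<longrightarrow> N $ i $ j \<noteq> 0 \<longrightarrow> M $ i $ j = 0) \<and>
     (\<forall>i j. i \<noteq> j \<longrightarrow> matrix_inv (M + N) $ i $ j \<noteq> 0 \<longrightarrow> M $ i $ j \<noteq> 0)"

definition inverse_consistent :: "real^'n^'n \<Rightarrow> bool" where
  "inverse_consistent M \<longleftrightarrow> sym_mat M \<and> (\<exists>N. ic_complement M N)"

text \<open>The set whose maximum is beta(G, alpha).\<close>
definition beta_vals :: "('n::finite \<Rightarrow> 'n \<Rightarrow> bool) \<Rightarrow> real \<Rightarrow> real set" where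
  "beta_vals E \<alpha> = {max_norm N | M N. inverse_consistent M \<and> pos_def M \<and> (\<forall>i. M $ i $ i = 1)
      \<and> supp_eq M E \<and> max_norm M \<le> \<alpha> \<and> ic_complement M N}"

end

theory Submission
  imports Defs
begin

text \<open>Write X = M + N and Y for the inverse of X, so that Y is supported by the chordal
  graph G and X agrees with M on the edges. A chordal graph always has a simplicial vertex v
  (Dirac), and eliminating v from Y by a Schur complement step keeps the support of the inverse
  inside G - v, which drives an induction on the vertex set. Row v of Y X = I expresses X v j,
  for j not adjacent to v, as a combination of the entries X c j over the clique C of neighbours
  of v; the rows indexed by C form a diagonally dominant system with unit diagonal, which bounds
  the coefficients by alpha / (1 - (|C| - 1) alpha). This yields
  |X v j| \<le> w alpha^2 / (1 - (w - 1) alpha), which is stronger than the claim by the factor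
  sqrt (d - w - 1) \<ge> 1.\<close>

section \<open>Simplicial vertices of chordal graphs\<close>

lemma simple_graph_sym: "simple_graph E \<Longrightarrow> E i j \<Longrightarrow> E j i"
  and simple_graph_irrefl: "simple_graph E \<Longrightarrow> \<not> E i i"
  unfolding simple_graph_def by auto

definition path_via :: "('n \<Rightarrow> 'n \<Rightarrow> bool) \<Rightarrow> 'n set \<Rightarrow> 'n \<Rightarrow> 'n \<Rightarrow> (nat \<Rightarrow> 'n) \<Rightarrow> nat \<Rightarrow> bool"
  where "path_via E C s t p n \<longleftrightarrow> p 0 = s \<and> p n = t \<and> (\<forall>i. 0 < i \<and> i < n \<longrightarrow> p i \<in> C)
     \<and> (\<forall>i<n. E (p i) (p (Suc i)))"

lemma path_via_shortcut:
  assumes "path_via E C s t p n" and "i + 1 < j" "j \<le> n" and "E (p i) (p j)"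
  shows "path_via E C s t (\<lambda>k. if k \<le> i then p k else p (k + (j - i - 1))) (n - (j - i - 1))"
  using assms unfolding path_via_def
  apply (intro conjI allI impI)
     apply simp
    apply (simp add: not_le)
  subgoal for k by (cases "k \<le> i") auto
  subgoal for k by (cases k i rule: linorder_cases) (simp_all add: not_le)
  done

lemma path_via_extend:
  assumes "path_via E C c1 c2 p n" and "c1 \<in> C" "c2 \<in> C" and "E s c1" "E c2 t"
  shows "path_via E C s t (\<lambda>k. if k = 0 then s else if k \<le> n + 1 then p (k - 1) else t) (n + 2)"
  unfolding path_via_def
proof (intro conjI allI impI)
  fix k
  show "0 < k \<and> k < n + 2 \<Longrightarrow> (if k = 0 then s else if k \<le> n + 1 then p (k - 1) else t) \<in> C"
    using assms unfolding path_via_def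
    by (cases "k = 1"; cases "k = n + 1") (auto simp: less_diff_conv)
  assume "k < n + 2"
  then consider "k = 0" | "k = n + 1" | "0 < k" "k \<le> n" by linarith
  then show "E (if k = 0 then s else if k \<le> n + 1 then p (k - 1) else t)
      (if Suc k = 0 then s else if Suc k \<le> n + 1 then p (Suc k - 1) else t)"
    using assms unfolding path_via_def
  proof cases
    case 3
    then have "k - 1 < n" by simp
    then have "E (p (k - 1)) (p (Suc (k - 1)))" using assms(1) unfolding path_via_def by blast
    with 3 show ?thesis by simp
  qed (use assms in \<open>auto simp: path_via_def\<close>)
qed simp_all

lemma rtranclp_imp_path_via:
  assumes "R\<^sup>*\<^sup>* x y" and "\<And>u v. R u v \<Longrightarrow> E u v"
    and "x \<in> C" and "\<And>u v. u \<in> C \<Longrightarrow> R u v \<Longrightarrow> v \<in> C"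
  shows "\<exists>p n. path_via E C x y p n"
  using assms(1)
proof (induction rule: rtranclp_induct)
  case base
  show ?case by (rule exI[of _ "\<lambda>_. x"], rule exI[of _ 0]) (simp add: path_via_def)
next
  case (step y z)
  then obtain p n where p: "path_via E C x y p n" by blast
  have "y \<in> C"
    using step.hyps(1) by (induction rule: rtranclp_induct) (use assms(3,4) in blast)+
  with p step.hyps(2) assms(2) have "path_via E C x z (p(Suc n := z)) (Suc n)"
    unfolding path_via_def by (auto simp: less_Suc_eq)
  then show ?case by blast
qed

lemma shortest_path_via_no_chord:
  assumes "path_via E C s t p n" and shortest: "\<And>q m. path_via E C s t q m \<Longrightarrow> n \<le> m"
    and "i + 1 < j" "j \<le> n"
  shows "\<not> E (p i) (p j)"
  using shortest[OF path_via_shortcut[OF assms(1,3,4)]] assms(3,4) by auto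

lemma shortest_path_via_inj:
  assumes path: "path_via E C s t p n" and shortest: "\<And>q m. path_via E C s t q m \<Longrightarrow> n \<le> m"
    and "s \<noteq> t"
  shows "inj_on p {..n}"
proof -
  have "p i \<noteq> p j" if ij: "i < j" "j \<le> n" for i j
  proof
    assume eq: "p i = p j"
    have step: "E (p k) (p (Suc k))" if "k < n" for k
      using path that unfolding path_via_def by blast
    show False
    proof (cases "j < n")
      case True
      then show False
        using step[of j] eq ij shortest_path_via_no_chord[OF path shortest, where i = i and j = "j + 1"] by simp
    next
      case False
      show False
      proof (cases "i = 0")
        case True
        then show False using path eq ij False \<open>s \<noteq> t\<close> unfolding path_via_def by simp
      next
        case False
        then show False
          using step[of "i - 1"] eq ij
            shortest_path_via_no_chord[OF path shortest, where i = "i - 1" and j = j]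
          by simp
      qed
    qed
  qed
  then show ?thesis by (metis atMost_iff inj_onI linorder_neqE_nat)
qed

lemma add_one_mod_eq: "i < (k::nat) \<Longrightarrow> (i + 1) mod k = (if i + 1 = k then 0 else i + 1)"
  by auto

lemma induced_cycle_close_path:
  assumes "simple_graph E" and "2 \<le> n"
    and path: "\<And>i j. i \<le> n \<Longrightarrow> j \<le> n \<Longrightarrow> E (q i) (q j) \<longleftrightarrow> (j = i + 1 \<or> i = j + 1)"
    and inj: "inj_on q {..n}"
    and apex: "\<And>t. t \<le> n \<Longrightarrow> q t \<noteq> a \<and> (E a (q t) \<longleftrightarrow> t = 0 \<or> t = n)"
  shows "induced_cycle E (n + 2) (\<lambda>t. if t = 0 then a else q (t - 1))"
    (is "induced_cycle E _ ?f")
  unfolding induced_cycle_def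
proof (intro conjI allI impI)
  show "3 \<le> n + 2" using \<open>2 \<le> n\<close> by simp
  show "inj_on ?f {..<n + 2}"
  proof (rule inj_onI)
    fix x y assume "x \<in> {..<n + 2}" "y \<in> {..<n + 2}" and eq: "?f x = ?f y"
    then have "x - 1 \<le> n" "y - 1 \<le> n" by auto
    with eq show "x = y"
      using apex[of "x - 1"] apex[of "y - 1"] inj_onD[OF inj, of "x - 1" "y - 1"]
      by (cases "x = 0"; cases "y = 0") auto
  qed
  fix i j assume i: "i < n + 2" and j: "j < n + 2"
  have sym: "E x y \<Longrightarrow> E y x" for x y using simple_graph_sym[OF assms(1)] .
  show "E (?f i) (?f j) \<longleftrightarrow> (j = (i + 1) mod (n + 2) \<or> i = (j + 1) mod (n + 2))"
    unfolding add_one_mod_eq[OF i] add_one_mod_eq[OF j]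
    using simple_graph_irrefl[OF assms(1), of a] apex[of "i - 1"] apex[of "j - 1"]
      path[of "i - 1" "j - 1"] sym[of "q (i - 1)" a] sym[of a "q (i - 1)"] i j
    by (cases "i = 0"; cases "j = 0") auto
qed

text \<open>A shortest such path closes up with a to an induced cycle of length at least 4.\<close>

lemma chordal_no_path_via_non_neighbours:
  assumes simple: "simple_graph E" and "chordal E"
    and "E a s" "E a t" "\<not> E s t" "s \<noteq> t"
    and "a \<notin> C" "\<forall>c\<in>C. \<not> E a c"
  shows "\<not> path_via E C s t p n"
proof
  assume "path_via E C s t p n"
  define m where "m = (LEAST m. \<exists>q. path_via E C s t q m)"
  have "\<exists>q. path_via E C s t q m"
    unfolding m_def by (rule LeastI_ex) (use \<open>path_via E C s t p n\<close> in blast)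
  then obtain q where q: "path_via E C s t q m" by blast
  have shortest: "\<And>q' m'. path_via E C s t q' m' \<Longrightarrow> m \<le> m'"
    unfolding m_def by (rule Least_le) blast
  have q0: "q 0 = s" and qm: "q m = t" and interior: "\<And>i. 0 < i \<Longrightarrow> i < m \<Longrightarrow> q i \<in> C"
    and step: "\<And>i. i < m \<Longrightarrow> E (q i) (q (Suc i))"
    using q unfolding path_via_def by auto
  have "m \<noteq> 0" using q0 qm \<open>s \<noteq> t\<close> by (cases "m = 0") auto
  moreover have "m \<noteq> 1" using q0 qm step[of 0] \<open>\<not> E s t\<close> by auto
  ultimately have "2 \<le> m" by simp
  have induced: "E (q i) (q j) \<longleftrightarrow> (j = i + 1 \<or> i = j + 1)" if "i \<le> m" "j \<le> m" for i j
  proof -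
    have forward: "E (q i) (q j) \<longleftrightarrow> j = i + 1" if "i < j" "j \<le> m" for i j
    proof (cases "j = i + 1")
      case True
      then show ?thesis using step[of i] that by simp
    next
      case False
      then show ?thesis
        using shortest_path_via_no_chord[OF q shortest, where i = i and j = j] that by simp
    qed
    show ?thesis
    proof (cases i j rule: linorder_cases)
      case less
      then show ?thesis using forward[of i j] that by simp
    next
      case equal
      then show ?thesis using simple_graph_irrefl[OF simple, of "q i"] by simp
    next
      case greater
      then show ?thesis
        using forward[of j i] that simple_graph_sym[OF simple, of "q i" "q j"]
          simple_graph_sym[OF simple, of "q j" "q i"] by auto
    qed
  qed
  have apex: "q k \<noteq> a \<and> (E a (q k) \<longleftrightarrow> k = 0 \<or> k = m)" if "k \<le> m" for k
  proof (cases "k = 0 \<or> k = m")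
    case True
    then show ?thesis
      using q0 qm \<open>E a s\<close> \<open>E a t\<close> simple_graph_irrefl[OF simple, of a] by auto
  next
    case False
    then have "q k \<in> C" using interior that by simp
    then show ?thesis using \<open>a \<notin> C\<close> \<open>\<forall>c\<in>C. \<not> E a c\<close> False by auto
  qed
  have "induced_cycle E (m + 2) (\<lambda>k. if k = 0 then a else q (k - 1))"
    by (rule induced_cycle_close_path[OF simple \<open>2 \<le> m\<close> induced
          shortest_path_via_inj[OF q shortest \<open>s \<noteq> t\<close>] apex])
  moreover have "3 < m + 2" using \<open>2 \<le> m\<close> by simp
  ultimately show False using \<open>chordal E\<close> unfolding chordal_def by blast
qed

lemma chordal_separator_clique:
  assumes "simple_graph E" "chordal E"
    and connected: "\<And>c1 c2. c1 \<in> C \<Longrightarrow> c2 \<in> C \<Longrightarrow> \<exists>p n. path_via E C c1 c2 p n"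
    and "a \<notin> C" "\<forall>c\<in>C. \<not> E a c"
    and "E a s" "E a t" "s \<noteq> t"
    and "c1 \<in> C" "E s c1" "c2 \<in> C" "E c2 t"
  shows "E s t"
proof (rule ccontr)
  assume "\<not> E s t"
  obtain p n where "path_via E C c1 c2 p n" using connected \<open>c1 \<in> C\<close> \<open>c2 \<in> C\<close> by blast
  from path_via_extend[OF this \<open>c1 \<in> C\<close> \<open>c2 \<in> C\<close> \<open>E s c1\<close> \<open>E c2 t\<close>]
    chordal_no_path_via_non_neighbours[OF assms(1,2,6,7) \<open>\<not> E s t\<close> assms(8,4,5)]
  show False by blast
qed

definition simplicial :: "('n \<Rightarrow> 'n \<Rightarrow> bool) \<Rightarrow> 'n set \<Rightarrow> 'n \<Rightarrow> bool" where
  "simplicial E U v \<longleftrightarrow> v \<in> U \<and> (\<forall>x\<in>U. \<forall>y\<in>U. E v x \<longrightarrow> E v y \<longrightarrow> x \<noteq> y \<longrightarrow> E x y)"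

lemma clique_simplicial: "is_clique E U \<Longrightarrow> v \<in> U \<Longrightarrow> simplicial E U v"
  unfolding simplicial_def is_clique_def by blast

lemma simplicial_superset:
  assumes "simplicial E W v" "W \<subseteq> U" and "\<And>x. x \<in> U \<Longrightarrow> E v x \<Longrightarrow> x \<in> W"
  shows "simplicial E U v"
  using assms unfolding simplicial_def by (meson subsetD)

text \<open>Dirac's argument: the component C of b in the graph minus the closed neighbourhood of a,
  together with its neighbours S (which lie next to a and form a clique by chordality), is a
  proper subset W of U; a simplicial vertex of W lying in C is simplicial in U.\<close>

lemma chordal_simplicial_non_neighbour:
  assumes simple: "simple_graph E" and "chordal E"
    and IH: "\<And>W. W \<subset> U \<Longrightarrow>
      is_clique E W \<or> (\<exists>v1 v2. simplicial E W v1 \<and> simplicial E W v2 \<and> v1 \<noteq> v2 \<and> \<not> E v1 v2)"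
    and "a \<in> U" "b \<in> U" "b \<noteq> a" "\<not> E a b"
  shows "\<exists>v. simplicial E U v \<and> v \<noteq> a \<and> \<not> E a v"
proof -
  define D where "D = {x\<in>U. x \<noteq> a \<and> \<not> E a x}"
  define R where "R x y \<longleftrightarrow> E x y \<and> x \<in> D \<and> y \<in> D" for x y
  define C where "C = {x. R\<^sup>*\<^sup>* b x}"
  define S where "S = {s\<in>U. s \<notin> C \<and> (\<exists>c\<in>C. E s c)}"
  define W where "W = C \<union> S"
  have sym: "E x y \<Longrightarrow> E y x" for x y using simple_graph_sym[OF simple] .
  have "b \<in> C" unfolding C_def by simp
  have R_closed: "c \<in> C \<Longrightarrow> R c x \<Longrightarrow> x \<in> C" for c x
    unfolding C_def by (simp add: rtranclp.rtrancl_into_rtrancl)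
  have "C \<subseteq> D"
  proof
    fix x assume "x \<in> C"
    then have "R\<^sup>*\<^sup>* b x" unfolding C_def by simp
    then show "x \<in> D"
      by (induction rule: rtranclp_induct) (use assms(5-7) in \<open>auto simp: D_def R_def\<close>)
  qed
  then have C_closed: "c \<in> C \<Longrightarrow> x \<in> D \<Longrightarrow> E c x \<Longrightarrow> x \<in> C" for c x
    using R_closed unfolding R_def by blast
  have S_adjacent: "E a s" if "s \<in> S" for s
  proof -
    from that obtain c where "c \<in> C" "E s c" "s \<in> U" "s \<notin> C" unfolding S_def by auto
    then have "s \<notin> D" using C_closed sym by blast
    moreover have "s \<noteq> a" using \<open>c \<in> C\<close> \<open>E s c\<close> \<open>C \<subseteq> D\<close> sym unfolding D_def by blast
    ultimately show "E a s" using \<open>s \<in> U\<close> unfolding D_def by auto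
  qed
  have "a \<notin> W"
    using \<open>C \<subseteq> D\<close> S_adjacent[of a] simple_graph_irrefl[OF simple, of a]
    unfolding W_def D_def by blast
  moreover have "W \<subseteq> U" using \<open>C \<subseteq> D\<close> unfolding W_def S_def D_def by blast
  ultimately have "W \<subset> U" using \<open>a \<in> U\<close> by blast
  have W_nbhd: "c \<in> C \<Longrightarrow> x \<in> U \<Longrightarrow> E c x \<Longrightarrow> x \<in> W" for c x
    unfolding W_def S_def using sym by blast
  have connected: "\<exists>p n. path_via E C c1 c2 p n" if "c1 \<in> C" "c2 \<in> C" for c1 c2
  proof -
    have "symp R" unfolding R_def by (rule sympI) (use sym in blast)
    have "R\<^sup>*\<^sup>* b c1" using that(1) unfolding C_def by simp
    then have "R\<^sup>*\<^sup>* c1 b" by (rule sympD[OF symp_rtranclp[OF \<open>symp R\<close>]])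
    moreover have "R\<^sup>*\<^sup>* b c2" using that(2) unfolding C_def by simp
    ultimately have "R\<^sup>*\<^sup>* c1 c2" by (rule rtranclp_trans)
    moreover have "R u v \<Longrightarrow> E u v" for u v unfolding R_def by blast
    ultimately show ?thesis using rtranclp_imp_path_via that(1) R_closed by metis
  qed
  have "a \<notin> C" "\<forall>c\<in>C. \<not> E a c" using \<open>C \<subseteq> D\<close> unfolding D_def by auto
  have S_clique: "E s t" if "s \<in> S" "t \<in> S" "s \<noteq> t" for s t
  proof -
    from that(1) obtain c1 where "c1 \<in> C" "E s c1" unfolding S_def by blast
    from that(2) obtain c2 where "c2 \<in> C" "E t c2" unfolding S_def by blast
    then have "E c2 t" using sym by blast
    show ?thesis
      by (rule chordal_separator_clique[OF simple \<open>chordal E\<close> connected \<open>a \<notin> C\<close>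
            \<open>\<forall>c\<in>C. \<not> E a c\<close> S_adjacent[OF that(1)] S_adjacent[OF that(2)] \<open>s \<noteq> t\<close>
            \<open>c1 \<in> C\<close> \<open>E s c1\<close> \<open>c2 \<in> C\<close> \<open>E c2 t\<close>])
  qed
  obtain v where "v \<in> C" "simplicial E W v"
  proof (cases "is_clique E W")
    case True
    have "b \<in> W" using \<open>b \<in> C\<close> unfolding W_def by blast
    with True have "simplicial E W b" by (rule clique_simplicial)
    with \<open>b \<in> C\<close> show thesis by (rule that)
  next
    case False
    then obtain v1 v2 where v: "simplicial E W v1" "simplicial E W v2" "v1 \<noteq> v2" "\<not> E v1 v2"
      using IH[OF \<open>W \<subset> U\<close>] by blast
    then have "v1 \<in> W" "v2 \<in> W" unfolding simplicial_def by blast+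
    have "v1 \<in> C \<or> v2 \<in> C"
    proof (rule ccontr)
      assume "\<not> (v1 \<in> C \<or> v2 \<in> C)"
      with \<open>v1 \<in> W\<close> \<open>v2 \<in> W\<close> have "v1 \<in> S" "v2 \<in> S" unfolding W_def by auto
      with S_clique v(3,4) show False by blast
    qed
    with v(1,2) that show thesis by blast
  qed
  have "simplicial E U v"
    by (rule simplicial_superset[OF \<open>simplicial E W v\<close>])
      (use \<open>W \<subset> U\<close> W_nbhd \<open>v \<in> C\<close> in blast)+
  moreover have "v \<noteq> a" "\<not> E a v" using \<open>v \<in> C\<close> \<open>C \<subseteq> D\<close> unfolding D_def by blast+
  ultimately show ?thesis by blast
qed

lemma chordal_clique_or_two_simplicial:
  assumes simple: "simple_graph E" and "chordal E" and "finite U"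
  shows "is_clique E U \<or> (\<exists>v1 v2. simplicial E U v1 \<and> simplicial E U v2 \<and> v1 \<noteq> v2 \<and> \<not> E v1 v2)"
  using \<open>finite U\<close>
proof (induction rule: finite_psubset_induct)
  case (psubset U)
  have IH: "is_clique E W \<or> (\<exists>v1 v2. simplicial E W v1 \<and> simplicial E W v2 \<and> v1 \<noteq> v2 \<and> \<not> E v1 v2)"
    if "W \<subset> U" for W
    using psubset.IH that .
  show ?case
  proof (cases "is_clique E U")
    case False
    then obtain a b where ab: "a \<in> U" "b \<in> U" "b \<noteq> a" "\<not> E a b"
      unfolding is_clique_def by blast
    have "\<exists>v1. simplicial E U v1 \<and> v1 \<noteq> a \<and> \<not> E a v1"
      using chordal_simplicial_non_neighbour[OF simple \<open>chordal E\<close> IH] ab by blast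
    then obtain v1 where v1: "simplicial E U v1" "v1 \<noteq> a" "\<not> E a v1" by blast
    have "v1 \<in> U" using v1(1) unfolding simplicial_def by blast
    have "\<not> E v1 a" using v1(3) simple_graph_sym[OF simple] by blast
    have "\<exists>v2. simplicial E U v2 \<and> v2 \<noteq> v1 \<and> \<not> E v1 v2"
      using chordal_simplicial_non_neighbour[OF simple \<open>chordal E\<close> IH] \<open>v1 \<in> U\<close> ab(1) v1(2)
        \<open>\<not> E v1 a\<close> by blast
    with v1 show ?thesis by blast
  qed simp
qed

lemma chordal_simplicial_exists:
  assumes "simple_graph E" "chordal E" "finite U" "U \<noteq> {}"
  shows "\<exists>v. simplicial E U v"
proof -
  obtain u where "u \<in> U" using \<open>U \<noteq> {}\<close> by blast
  from chordal_clique_or_two_simplicial[OF assms(1-3)] show ?thesis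
  proof
    assume "is_clique E U"
    with \<open>u \<in> U\<close> show ?thesis by (blast intro: clique_simplicial)
  qed blast
qed

section \<open>Eliminating a simplicial vertex\<close>

definition left_inverse_on :: "'n set \<Rightarrow> ('n \<Rightarrow> 'n \<Rightarrow> real) \<Rightarrow> ('n \<Rightarrow> 'n \<Rightarrow> real) \<Rightarrow> bool"
  where "left_inverse_on U Y X \<longleftrightarrow>
    (\<forall>i\<in>U. \<forall>k\<in>U. (\<Sum>l\<in>U. Y i l * X l k) = (if i = k then 1 else 0))"

definition supported_by :: "('n \<Rightarrow> 'n \<Rightarrow> bool) \<Rightarrow> 'n set \<Rightarrow> ('n \<Rightarrow> 'n \<Rightarrow> real) \<Rightarrow> bool"
  where "supported_by E U Y \<longleftrightarrow> (\<forall>i\<in>U. \<forall>l\<in>U. i \<noteq> l \<longrightarrow> Y i l \<noteq> 0 \<longrightarrow> E i l)"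

lemma diagonally_dominant_solution_bound:
  fixes A :: "'n \<Rightarrow> 'n \<Rightarrow> real" and z :: "'n \<Rightarrow> real"
  assumes "finite C"
    and off_diag: "\<And>c k. c \<in> C \<Longrightarrow> k \<in> C \<Longrightarrow> c \<noteq> k \<Longrightarrow> \<bar>A c k\<bar> \<le> \<alpha>"
    and diag: "\<And>k. k \<in> C \<Longrightarrow> A k k = 1"
    and dominant: "0 < 1 - (real (card C) - 1) * \<alpha>"
    and bound: "\<And>k. k \<in> C \<Longrightarrow> \<bar>\<Sum>c\<in>C. z c * A c k\<bar> \<le> \<beta>"
    and "c \<in> C"
  shows "\<bar>z c\<bar> * (1 - (real (card C) - 1) * \<alpha>) \<le> \<beta>"
proof -
  have "Max ((\<lambda>c. \<bar>z c\<bar>) ` C) \<in> (\<lambda>c. \<bar>z c\<bar>) ` C"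
    using \<open>finite C\<close> \<open>c \<in> C\<close> by (intro Max_in) auto
  then obtain c0 where "c0 \<in> C" and c0_max: "\<bar>z c0\<bar> = Max ((\<lambda>c. \<bar>z c\<bar>) ` C)" by auto
  have largest: "\<bar>z c\<bar> \<le> \<bar>z c0\<bar>" if "c \<in> C" for c
    unfolding c0_max using \<open>finite C\<close> that by (intro Max_ge) auto
  have "\<bar>\<Sum>c\<in>C - {c0}. z c * A c c0\<bar> \<le> (\<Sum>c\<in>C - {c0}. \<bar>z c0\<bar> * \<alpha>)"
  proof (rule order_trans[OF sum_abs sum_mono])
    fix c assume "c \<in> C - {c0}"
    then show "\<bar>z c * A c c0\<bar> \<le> \<bar>z c0\<bar> * \<alpha>"
      unfolding abs_mult using largest off_diag \<open>c0 \<in> C\<close> by (intro mult_mono) auto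
  qed
  also have "\<dots> = (real (card C) - 1) * \<bar>z c0\<bar> * \<alpha>"
  proof -
    have "1 \<le> card C" using \<open>finite C\<close> \<open>c0 \<in> C\<close> by (auto simp: Suc_le_eq card_gt_0_iff)
    then show ?thesis using \<open>finite C\<close> \<open>c0 \<in> C\<close> by (simp add: card_Diff_singleton of_nat_diff)
  qed
  finally have rest: "\<bar>\<Sum>c\<in>C - {c0}. z c * A c c0\<bar> \<le> (real (card C) - 1) * \<bar>z c0\<bar> * \<alpha>" .
  have "(\<Sum>c\<in>C. z c * A c c0) = z c0 + (\<Sum>c\<in>C - {c0}. z c * A c c0)"
    using sum.remove[OF \<open>finite C\<close> \<open>c0 \<in> C\<close>, of "\<lambda>c. z c * A c c0"] diag[OF \<open>c0 \<in> C\<close>]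
    by simp
  then have "\<bar>z c0\<bar> \<le> \<beta> + (real (card C) - 1) * \<bar>z c0\<bar> * \<alpha>"
    using bound[OF \<open>c0 \<in> C\<close>] rest by linarith
  then have "\<bar>z c0\<bar> * (1 - (real (card C) - 1) * \<alpha>) \<le> \<beta>" by (simp add: algebra_simps)
  moreover have "\<bar>z c\<bar> * (1 - (real (card C) - 1) * \<alpha>) \<le> \<bar>z c0\<bar> * (1 - (real (card C) - 1) * \<alpha>)"
    using largest[OF \<open>c \<in> C\<close>] dominant by (intro mult_right_mono) simp_all
  ultimately show ?thesis by linarith
qed

lemma left_inverse_on_Schur_complement:
  assumes "finite U" and inv: "left_inverse_on U Y X" and "v \<in> U" "Y v v \<noteq> 0"
  shows "left_inverse_on (U - {v}) (\<lambda>i l. Y i l - Y i v * Y v l / Y v v) X"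
  unfolding left_inverse_on_def
proof (intro ballI)
  fix i k assume "i \<in> U - {v}" "k \<in> U - {v}"
  then have "i \<in> U" "k \<in> U" "k \<noteq> v" by auto
  have remove: "(\<Sum>l\<in>U - {v}. Y a l * X l k) = (\<Sum>l\<in>U. Y a l * X l k) - Y a v * X v k" for a
    using sum.remove[OF \<open>finite U\<close> \<open>v \<in> U\<close>, of "\<lambda>l. Y a l * X l k"] by simp
  have row_i: "(\<Sum>l\<in>U. Y i l * X l k) = (if i = k then 1 else 0)"
    and row_v: "(\<Sum>l\<in>U. Y v l * X l k) = 0"
    using inv \<open>i \<in> U\<close> \<open>k \<in> U\<close> \<open>v \<in> U\<close> \<open>k \<noteq> v\<close> unfolding left_inverse_on_def by auto
  have "(\<Sum>l\<in>U - {v}. (Y i l - Y i v * Y v l / Y v v) * X l k)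
      = (\<Sum>l\<in>U - {v}. Y i l * X l k) - Y i v / Y v v * (\<Sum>l\<in>U - {v}. Y v l * X l k)"
    by (simp add: sum_subtractf sum_distrib_left algebra_simps)
  also have "\<dots> = (if i = k then 1 else 0)"
    unfolding remove row_i row_v using \<open>Y v v \<noteq> 0\<close> by simp
  finally show "(\<Sum>l\<in>U - {v}. (Y i l - Y i v * Y v l / Y v v) * X l k) = (if i = k then 1 else 0)" .
qed

text \<open>Fill-in i -- v -- l only creates an entry at an edge when v is simplicial.\<close>

lemma supported_by_Schur_complement:
  assumes simple: "simple_graph E" and supp: "supported_by E U Y" and "simplicial E U v"
  shows "supported_by E (U - {v}) (\<lambda>i l. Y i l - Y i v * Y v l / Y v v)"
  unfolding supported_by_def
proof (intro ballI impI)
  fix i l assume "i \<in> U - {v}" "l \<in> U - {v}" "i \<noteq> l"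
    and nonzero: "Y i l - Y i v * Y v l / Y v v \<noteq> 0"
  then have "i \<in> U" "l \<in> U" "i \<noteq> v" "l \<noteq> v" "v \<in> U"
    using \<open>simplicial E U v\<close> unfolding simplicial_def by auto
  show "E i l"
  proof (cases "Y i l = 0")
    case True
    with nonzero have "Y i v \<noteq> 0" "Y v l \<noteq> 0" by auto
    then have "E i v" "E v l"
      using supp \<open>i \<in> U\<close> \<open>l \<in> U\<close> \<open>v \<in> U\<close> \<open>i \<noteq> v\<close> \<open>l \<noteq> v\<close> unfolding supported_by_def by auto
    then show ?thesis
      using simple_graph_sym[OF simple \<open>E i v\<close>] \<open>simplicial E U v\<close> \<open>i \<in> U\<close> \<open>l \<in> U\<close> \<open>i \<noteq> l\<close>
      unfolding simplicial_def by blast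
  qed (use supp \<open>i \<in> U\<close> \<open>l \<in> U\<close> \<open>i \<noteq> l\<close> in \<open>auto simp: supported_by_def\<close>)
qed

lemma left_inverse_on_row_neighbours:
  assumes simple: "simple_graph E" and "finite U"
    and inv: "left_inverse_on U Y X" and supp: "supported_by E U Y" and "v \<in> U" "k \<in> U"
  shows "Y v v * X v k + (\<Sum>c\<in>{c\<in>U. E v c}. Y v c * X c k) = (if v = k then 1 else 0)"
proof -
  have "(\<Sum>l\<in>U - {v}. Y v l * X l k) = (\<Sum>c\<in>{c\<in>U. E v c}. Y v c * X c k)"
    using supp \<open>v \<in> U\<close> simple_graph_irrefl[OF simple, of v] \<open>finite U\<close>
    by (intro sum.mono_neutral_right) (auto simp: supported_by_def)
  moreover have "(\<Sum>l\<in>U. Y v l * X l k) = Y v v * X v k + (\<Sum>l\<in>U - {v}. Y v l * X l k)"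
    using sum.remove[OF \<open>finite U\<close> \<open>v \<in> U\<close>] by simp
  ultimately show ?thesis using inv \<open>v \<in> U\<close> \<open>k \<in> U\<close> unfolding left_inverse_on_def by simp
qed

lemma ratio_mono:
  fixes a b \<alpha> :: real
  assumes "0 \<le> \<alpha>" "a \<le> b" "0 < 1 - (b - 1) * \<alpha>"
  shows "a / (1 - (a - 1) * \<alpha>) \<le> b / (1 - (b - 1) * \<alpha>)"
proof -
  have "0 < 1 - (a - 1) * \<alpha>"
    using assms by (smt (verit) mult_right_mono)
  moreover have "a * (1 - (b - 1) * \<alpha>) \<le> b * (1 - (a - 1) * \<alpha>)"
    using mult_right_mono[OF \<open>a \<le> b\<close>, of "1 + \<alpha>"] \<open>0 \<le> \<alpha>\<close> by (simp add: algebra_simps)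
  ultimately show ?thesis using assms(3) by (simp add: divide_simps)
qed

text \<open>X plays the role of the positive definite completion M + N, and w that of the treewidth.\<close>

locale chordal_unit_matrix =
  fixes E :: "'n \<Rightarrow> 'n \<Rightarrow> bool" and X :: "'n \<Rightarrow> 'n \<Rightarrow> real" and \<alpha> :: real and w :: nat
  assumes simple: "simple_graph E" and chordal: "chordal E"
    and diag: "\<And>i. X i i = 1" and symmetric: "\<And>i j. X i j = X j i"
    and edge_le: "\<And>i j. i \<noteq> j \<Longrightarrow> E i j \<Longrightarrow> \<bar>X i j\<bar> \<le> \<alpha>"
    and clique_card_le: "\<And>K. is_clique E K \<Longrightarrow> card K \<le> w + 1"
    and alpha_nonneg: "0 \<le> \<alpha>" and alpha_small: "real w * \<alpha> < 1 - (real w - 1) * \<alpha>"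
begin

lemma denominator_pos: "0 < 1 - (real w - 1) * \<alpha>"
  using alpha_small alpha_nonneg by (smt (verit) mult_nonneg_nonneg of_nat_0_le_iff)

lemma entry_bound_le_alpha: "real w * \<alpha>\<^sup>2 / (1 - (real w - 1) * \<alpha>) \<le> \<alpha>"
proof -
  have "real w * \<alpha> * \<alpha> \<le> (1 - (real w - 1) * \<alpha>) * \<alpha>"
    using alpha_small alpha_nonneg by (intro mult_right_mono) auto
  then show ?thesis using denominator_pos by (simp add: divide_le_eq power2_eq_square mult_ac)
qed

lemma neighbourhood_card_le:
  assumes "finite U" "simplicial E U v"
  shows "card {c\<in>U. E v c} \<le> w"
proof -
  have "is_clique E (insert v {c\<in>U. E v c})"
    using assms(2) simple_graph_sym[OF simple] unfolding is_clique_def simplicial_def by blast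
  then have "card (insert v {c\<in>U. E v c}) \<le> w + 1" by (rule clique_card_le)
  moreover have "v \<notin> {c\<in>U. E v c}" using simple_graph_irrefl[OF simple] by blast
  ultimately show ?thesis using \<open>finite U\<close> by simp
qed

lemma neighbourhood_denominator_pos:
  assumes "finite U" "simplicial E U v"
  shows "0 < 1 - (real (card {c\<in>U. E v c}) - 1) * \<alpha>"
proof -
  have "(real (card {c\<in>U. E v c}) - 1) * \<alpha> \<le> (real w - 1) * \<alpha>"
    using neighbourhood_card_le[OF assms] alpha_nonneg by (intro mult_right_mono) auto
  then show ?thesis using denominator_pos by linarith
qed

lemma neighbourhood_coefficient_bound:
  assumes "finite U" "simplicial E U v"
    and bound: "\<And>k. k \<in> U \<Longrightarrow> E v k \<Longrightarrow> \<bar>\<Sum>c\<in>{c\<in>U. E v c}. z c * X c k\<bar> \<le> \<beta>"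
    and "c \<in> U" "E v c"
  shows "\<bar>z c\<bar> * (1 - (real (card {c\<in>U. E v c}) - 1) * \<alpha>) \<le> \<beta>"
proof (rule diagonally_dominant_solution_bound)
  let ?C = "{c\<in>U. E v c}"
  show "\<bar>X c k\<bar> \<le> \<alpha>" if "c \<in> ?C" "k \<in> ?C" "c \<noteq> k" for c k
    using that \<open>simplicial E U v\<close> edge_le unfolding simplicial_def by blast
  show "0 < 1 - (real (card ?C) - 1) * \<alpha>" by (rule neighbourhood_denominator_pos[OF assms(1,2)])
  show "finite ?C" using \<open>finite U\<close> by simp
  show "X k k = 1" for k by (rule diag)
  show "\<bar>\<Sum>c\<in>?C. z c * X c k\<bar> \<le> \<beta>" if "k \<in> ?C" for k using that bound by blast
  show "c \<in> ?C" using \<open>c \<in> U\<close> \<open>E v c\<close> by blast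
qed

lemma simplicial_pivot_nonzero:
  assumes "finite U" and inv: "left_inverse_on U Y X" and supp: "supported_by E U Y"
    and "simplicial E U v"
  shows "Y v v \<noteq> 0"
proof
  assume pivot: "Y v v = 0"
  let ?C = "{c\<in>U. E v c}"
  have "v \<in> U" using \<open>simplicial E U v\<close> unfolding simplicial_def by blast
  note row = left_inverse_on_row_neighbours[OF simple \<open>finite U\<close> inv supp \<open>v \<in> U\<close>]
  have "Y v c = 0" if "c \<in> ?C" for c
  proof -
    have "\<bar>\<Sum>c\<in>?C. Y v c * X c k\<bar> \<le> 0" if "k \<in> U" "E v k" for k
    proof -
      have "v \<noteq> k" using \<open>E v k\<close> simple_graph_irrefl[OF simple] by blast
      then show ?thesis using row[OF \<open>k \<in> U\<close>] pivot by simp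
    qed
    then have "\<bar>Y v c\<bar> * (1 - (real (card ?C) - 1) * \<alpha>) \<le> 0"
      using neighbourhood_coefficient_bound[OF \<open>finite U\<close> \<open>simplicial E U v\<close>] that by blast
    with neighbourhood_denominator_pos[OF \<open>finite U\<close> \<open>simplicial E U v\<close>] show ?thesis
      by (simp add: mult_le_0_iff)
  qed
  then show False using row[OF \<open>v \<in> U\<close>] pivot by simp
qed

lemma simplicial_entry_bound:
  assumes "finite U" and inv: "left_inverse_on U Y X" and supp: "supported_by E U Y"
    and "simplicial E U v" and "j \<in> U" "j \<noteq> v" "\<not> E v j"
    and column: "\<And>c. c \<in> U \<Longrightarrow> E v c \<Longrightarrow> \<bar>X c j\<bar> \<le> \<alpha>"
  shows "\<bar>X v j\<bar> \<le> real w * \<alpha>\<^sup>2 / (1 - (real w - 1) * \<alpha>)"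
proof -
  let ?C = "{c\<in>U. E v c}"
  define lam where "lam = 1 - (real (card ?C) - 1) * \<alpha>"
  define y where "y c = Y v c / Y v v" for c
  have "v \<in> U" using \<open>simplicial E U v\<close> unfolding simplicial_def by blast
  have "Y v v \<noteq> 0" by (rule simplicial_pivot_nonzero[OF assms(1-4)])
  have "0 < lam" unfolding lam_def by (rule neighbourhood_denominator_pos[OF assms(1,4)])
  have combination: "(\<Sum>c\<in>?C. y c * X c k) = - X v k" if "k \<in> U" "k \<noteq> v" for k
  proof -
    have "Y v v * X v k + (\<Sum>c\<in>?C. Y v c * X c k) = 0"
      using left_inverse_on_row_neighbours[OF simple \<open>finite U\<close> inv supp \<open>v \<in> U\<close> \<open>k \<in> U\<close>] that
      by simp
    then show ?thesis
      using \<open>Y v v \<noteq> 0\<close> unfolding y_def by (simp add: sum_divide_distrib[symmetric] field_simps)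
  qed
  have coefficient: "\<bar>y c\<bar> \<le> \<alpha> / lam" if "c \<in> ?C" for c
  proof -
    have "\<bar>\<Sum>c\<in>?C. y c * X c k\<bar> \<le> \<alpha>" if "k \<in> U" "E v k" for k
    proof -
      have "k \<noteq> v" using \<open>E v k\<close> simple_graph_irrefl[OF simple] by blast
      with that show ?thesis using combination edge_le[of v k] by simp
    qed
    then have "\<bar>y c\<bar> * lam \<le> \<alpha>"
      unfolding lam_def using neighbourhood_coefficient_bound[OF assms(1,4)] that by blast
    with \<open>0 < lam\<close> show ?thesis by (simp add: le_divide_eq)
  qed
  have "\<bar>X v j\<bar> = \<bar>\<Sum>c\<in>?C. y c * X c j\<bar>" using combination[OF \<open>j \<in> U\<close> \<open>j \<noteq> v\<close>] by simp
  also have "\<dots> \<le> (\<Sum>c\<in>?C. \<alpha> / lam * \<alpha>)"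
  proof (rule order_trans[OF sum_abs sum_mono])
    fix c assume "c \<in> ?C"
    then show "\<bar>y c * X c j\<bar> \<le> \<alpha> / lam * \<alpha>"
      unfolding abs_mult using coefficient column \<open>0 < lam\<close> alpha_nonneg by (intro mult_mono) auto
  qed
  also have "\<dots> = real (card ?C) / lam * \<alpha>\<^sup>2" by (simp add: power2_eq_square)
  also have "\<dots> \<le> real w / (1 - (real w - 1) * \<alpha>) * \<alpha>\<^sup>2"
    unfolding lam_def using neighbourhood_card_le[OF assms(1,4)] alpha_nonneg denominator_pos
    by (intro mult_right_mono ratio_mono) auto
  finally show ?thesis by simp
qed

theorem off_support_entry_bound:
  assumes "finite U" "left_inverse_on U Y X" "supported_by E U Y"
    and "i \<in> U" "j \<in> U" "i \<noteq> j" "\<not> E i j"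
  shows "\<bar>X i j\<bar> \<le> real w * \<alpha>\<^sup>2 / (1 - (real w - 1) * \<alpha>)"
  using assms
proof (induction U arbitrary: Y i j rule: finite_psubset_induct)
  case (psubset U)
  obtain v where v: "simplicial E U v"
    using chordal_simplicial_exists[OF simple chordal \<open>finite U\<close>] \<open>i \<in> U\<close> by blast
  then have "v \<in> U" unfolding simplicial_def by blast
  define Y' where "Y' i l = Y i l - Y i v * Y v l / Y v v" for i l
  have inv': "left_inverse_on (U - {v}) Y' X" unfolding Y'_def
    by (rule left_inverse_on_Schur_complement[OF \<open>finite U\<close> psubset.prems(1) \<open>v \<in> U\<close>
          simplicial_pivot_nonzero[OF \<open>finite U\<close> psubset.prems(1,2) v]])
  have supp': "supported_by E (U - {v}) Y'" unfolding Y'_def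
    by (rule supported_by_Schur_complement[OF simple psubset.prems(2) v])
  have IH: "\<bar>X i j\<bar> \<le> real w * \<alpha>\<^sup>2 / (1 - (real w - 1) * \<alpha>)"
    if "i \<in> U - {v}" "j \<in> U - {v}" "i \<noteq> j" "\<not> E i j" for i j
    using psubset.IH[of "U - {v}" Y' i j] \<open>v \<in> U\<close> \<open>finite U\<close> inv' supp' that by blast
  have at_v: "\<bar>X v j\<bar> \<le> real w * \<alpha>\<^sup>2 / (1 - (real w - 1) * \<alpha>)"
    if "j \<in> U" "j \<noteq> v" "\<not> E v j" for j
  proof (rule simplicial_entry_bound[OF \<open>finite U\<close> psubset.prems(1,2) v that])
    fix c assume "c \<in> U" "E v c"
    then have "c \<noteq> j" "c \<noteq> v" using \<open>\<not> E v j\<close> simple_graph_irrefl[OF simple] by blast+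
    show "\<bar>X c j\<bar> \<le> \<alpha>"
    proof (cases "E c j")
      case False
      with IH[of c j] \<open>c \<in> U\<close> \<open>j \<in> U\<close> \<open>c \<noteq> j\<close> \<open>c \<noteq> v\<close> \<open>j \<noteq> v\<close> entry_bound_le_alpha
      show ?thesis by simp
    qed (rule edge_le[OF \<open>c \<noteq> j\<close>])
  qed
  consider "i = v" | "j = v" | "i \<noteq> v" "j \<noteq> v" by blast
  then show ?case
  proof cases
    case 1
    then show ?thesis using at_v psubset.prems(4-6) by simp
  next
    case 2
    then have "\<not> E v i" using psubset.prems(6) simple_graph_sym[OF simple] by blast
    then show ?thesis using at_v[of i] 2 psubset.prems(3,5) symmetric[of i j] by simp
  next
    case 3
    then show ?thesis using IH psubset.prems(3-6) by simp
  qed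
qed

end

lemma finite_off_diagonal_entries: "finite {\<bar>M $ i $ j\<bar> | i j. i \<noteq> (j::'n::finite)}"
proof -
  have "{\<bar>M $ i $ j\<bar> | i j. i \<noteq> (j::'n)} \<subseteq> (\<lambda>(i, j). \<bar>M $ i $ j\<bar>) ` UNIV" by auto
  then show ?thesis by (rule finite_subset) simp
qed

lemma abs_le_max_norm: "i \<noteq> j \<Longrightarrow> \<bar>M $ i $ j\<bar> \<le> max_norm (M::real^'n::finite^'n)"
  unfolding max_norm_def using finite_off_diagonal_entries[of M] by (intro Max_ge) auto

lemma max_norm_nonneg: "0 \<le> max_norm (M::real^'n::finite^'n)"
  unfolding max_norm_def using finite_off_diagonal_entries[of M] by (intro Max_ge) auto

lemma max_norm_le:
  assumes "0 \<le> B" and "\<And>i j. i \<noteq> j \<Longrightarrow> \<bar>M $ i $ j\<bar> \<le> B"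
  shows "max_norm (M::real^'n::finite^'n) \<le> B"
  unfolding max_norm_def using finite_off_diagonal_entries[of M] assms by (intro Max.boundedI) auto

lemma card_clique_le_treewidth:
  fixes E :: "'n::finite \<Rightarrow> 'n \<Rightarrow> bool"
  assumes "is_clique E K"
  shows "card K \<le> treewidth E + 1"
proof -
  let ?S = "{card C | C. is_clique E C}"
  have "?S \<subseteq> {..CARD('n)}" by (auto intro: card_mono)
  then have "finite ?S" by (rule finite_subset) simp
  moreover have "is_clique E {undefined}" unfolding is_clique_def by simp
  then have "1 \<in> ?S" by force
  ultimately have "1 \<le> Max ?S" by (rule Max_ge)
  moreover have "card K \<le> Max ?S" using \<open>finite ?S\<close> assms by (intro Max_ge) auto
  ultimately show ?thesis unfolding treewidth_def by linarith
qed

lemma sym_mat_entry: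
  assumes "sym_mat M"
  shows "M $ i $ j = M $ j $ i"
proof -
  have "transpose M $ i $ j = M $ i $ j" using assms unfolding sym_mat_def by simp
  then show ?thesis by (simp add: transpose_def)
qed

lemma pos_def_left_inverse_on:
  fixes A :: "real^'n::finite^'n"
  assumes "pos_def A"
  shows "left_inverse_on UNIV (\<lambda>i j. matrix_inv A $ i $ j) (\<lambda>i j. A $ i $ j)"
proof -
  have "x = 0" if "A *v x = 0" for x
    using assms that unfolding pos_def_def by (metis inner_zero_right less_irrefl)
  then have "invertible A" using matrix_left_invertible_ker invertible_left_inverse by blast
  then have "A ** matrix_inv A = mat 1 \<and> matrix_inv A ** A = mat 1"
    unfolding invertible_def matrix_inv_def by (rule someI_ex)
  then have "(matrix_inv A ** A) $ i $ k = (if i = k then 1 else 0)" for i k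
    by (simp add: mat_def)
  then show ?thesis unfolding left_inverse_on_def by (simp add: matrix_matrix_mult_def)
qed

lemma ic_complement_max_norm_le:
  fixes E :: "'n::finite \<Rightarrow> 'n \<Rightarrow> bool"
  assumes "simple_graph E" "chordal E"
    and supp: "supp_eq M E" and diag: "\<forall>i. M $ i $ i = 1" and "max_norm M \<le> \<alpha>"
    and complement: "ic_complement M N"
    and small: "real (treewidth E) * \<alpha> < 1 - (real (treewidth E) - 1) * \<alpha>"
  shows "max_norm N \<le> real (treewidth E) * \<alpha>\<^sup>2 / (1 - (real (treewidth E) - 1) * \<alpha>)"
proof -
  let ?X = "\<lambda>i j. (M + N) $ i $ j"
  have N: "sym_mat N" "\<forall>i. N $ i $ i = 0" "pos_def (M + N)"
    "\<forall>i j. i \<noteq> j \<longrightarrow> N $ i $ j \<noteq> 0 \<longrightarrow> M $ i $ j = 0"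
    "\<forall>i j. i \<noteq> j \<longrightarrow> matrix_inv (M + N) $ i $ j \<noteq> 0 \<longrightarrow> M $ i $ j \<noteq> 0"
    using complement unfolding ic_complement_def by auto
  have edge: "M $ i $ j \<noteq> 0 \<longleftrightarrow> E i j" if "i \<noteq> j" for i j
    using supp that unfolding supp_eq_def by blast
  interpret chordal_unit_matrix E ?X \<alpha> "treewidth E"
  proof
    show "\<bar>?X i j\<bar> \<le> \<alpha>" if "i \<noteq> j" "E i j" for i j
      using that edge N(4) abs_le_max_norm[of i j M] \<open>max_norm M \<le> \<alpha>\<close> by force
    show "?X i j = ?X j i" for i j
      using sym_mat_entry N(3) unfolding pos_def_def by blast
    show "0 \<le> \<alpha>" using max_norm_nonneg[of M] \<open>max_norm M \<le> \<alpha>\<close> by linarith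
  qed (use assms N(2) card_clique_le_treewidth in auto)
  show ?thesis
  proof (rule max_norm_le)
    show "0 \<le> real (treewidth E) * \<alpha>\<^sup>2 / (1 - (real (treewidth E) - 1) * \<alpha>)"
      using denominator_pos by simp
    fix i j :: 'n assume "i \<noteq> j"
    show "\<bar>N $ i $ j\<bar> \<le> real (treewidth E) * \<alpha>\<^sup>2 / (1 - (real (treewidth E) - 1) * \<alpha>)"
    proof (cases "N $ i $ j = 0")
      case False
      then have "M $ i $ j = 0" using N(4) \<open>i \<noteq> j\<close> by blast
      have "supported_by E UNIV (\<lambda>i j. matrix_inv (M + N) $ i $ j)"
        using N(5) edge unfolding supported_by_def by blast
      then have "\<bar>?X i j\<bar> \<le> real (treewidth E) * \<alpha>\<^sup>2 / (1 - (real (treewidth E) - 1) * \<alpha>)"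
        using off_support_entry_bound[OF finite_class.finite_UNIV pos_def_left_inverse_on[OF N(3)]]
          edge[OF \<open>i \<noteq> j\<close>] \<open>M $ i $ j = 0\<close> \<open>i \<noteq> j\<close> by blast
      with \<open>M $ i $ j = 0\<close> show ?thesis by simp
    qed (use denominator_pos in simp)
  qed
qed

lemma treewidth_hypotheses:
  fixes w d :: nat and \<alpha> :: real
  assumes "0 \<le> \<alpha>" "real w \<le> 2 / 3 * (real d - 1)"
    and "\<alpha> < 1 / (real w * sqrt (real d - real w - 1) + real w - 1)"
  shows "1 \<le> sqrt (real d - real w - 1)" and "real w * \<alpha> < 1 - (real w - 1) * \<alpha>"
proof -
  have "w \<noteq> 0"
  proof
    assume "w = 0"
    with assms(3) have "\<alpha> < -1" by simp
    with assms(1) show False by simp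
  qed
  then have "1 \<le> real w" by simp
  moreover have "3 * real w \<le> 2 * real d - 2" using assms(2) by simp
  ultimately have "real w + 1 < real d" by linarith
  then have "w + 2 \<le> d" by linarith
  then show root: "1 \<le> sqrt (real d - real w - 1)" by simp
  then have "2 * real w - 1 \<le> real w * sqrt (real d - real w - 1) + real w - 1"
    using mult_left_mono[OF root, of "real w"] by simp
  moreover have "0 < 2 * real w - 1" using \<open>w \<noteq> 0\<close> by simp
  ultimately have "\<alpha> * (2 * real w - 1) < 1"
    using assms(1,3) by (smt (verit) less_divide_eq mult_left_mono)
  then show "real w * \<alpha> < 1 - (real w - 1) * \<alpha>" by (simp add: algebra_simps)
qed

theorem theorem2:
  fixes E :: "'n::finite \<Rightarrow> 'n \<Rightarrow> bool" and \<alpha> :: real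
  assumes "simple_graph E"
    and "chordal E"
    and "real (treewidth E) \<le> 2 / 3 * (real CARD('n) - 1)"
    and "\<alpha> < 1 / (real (treewidth E) * sqrt (real CARD('n) - real (treewidth E) - 1)
                  + real (treewidth E) - 1)"
  shows "\<forall>b \<in> beta_vals E \<alpha>. b \<le> real (treewidth E) * sqrt (real CARD('n) - real (treewidth E) - 1) * \<alpha>\<^sup>2
                  / (1 - (real (treewidth E) - 1) * \<alpha>)"
proof
  let ?w = "real (treewidth E)" and ?s = "sqrt (real CARD('n) - real (treewidth E) - 1)"
  fix b assume "b \<in> beta_vals E \<alpha>"
  then obtain M N where M: "\<forall>i. M $ i $ i = 1" "supp_eq M E" "max_norm M \<le> \<alpha>"
    and "ic_complement M N" and "b = max_norm N"
    unfolding beta_vals_def by blast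
  have "0 \<le> \<alpha>" using max_norm_nonneg[of M] M(3) by linarith
  note hyps = treewidth_hypotheses[OF \<open>0 \<le> \<alpha>\<close> assms(3,4)]
  have "b \<le> ?w * \<alpha>\<^sup>2 / (1 - (?w - 1) * \<alpha>)"
    unfolding \<open>b = max_norm N\<close>
    by (rule ic_complement_max_norm_le[OF assms(1,2) M(2,1,3) \<open>ic_complement M N\<close> hyps(2)])
  also have "\<dots> \<le> ?w * ?s * \<alpha>\<^sup>2 / (1 - (?w - 1) * \<alpha>)"
  proof (rule divide_right_mono)
    show "?w * \<alpha>\<^sup>2 \<le> ?w * ?s * \<alpha>\<^sup>2"
      using mult_left_mono[OF hyps(1), of "?w * \<alpha>\<^sup>2"] by (simp add: mult_ac)
    show "0 \<le> 1 - (?w - 1) * \<alpha>"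
      using hyps(2) \<open>0 \<le> \<alpha>\<close> by (smt (verit) mult_nonneg_nonneg of_nat_0_le_iff)
  qed
  finally show "b \<le> ?w * ?s * \<alpha>\<^sup>2 / (1 - (?w - 1) * \<alpha>)" .
qed

end
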